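(* Let $A\in\mathbb R^{m\times n}$ with $A\ge\mathbf 0$, $b\in\mathbb R^m$, $c\in\mathbb R^n$, and suppose the linear program $(P)$: $\max c^\intercal x$ s.t. $Ax\le b$, $x\ge\mathbf 0$ is feasible. Then $(P)$ is unbounded if and only if there exists $j^*\in[n]$ such that $c_{j^*}>0$ and the $j^*$-th column of $A$ is the zero vector.
   Context: Inequalities are componentwise. $(P)$ is unbounded if its objective is unbounded above on its feasible set. *)

theory Defs
  imports "HOL-Analysis.Analysis"
begin

end

theory Submission
  imports Defs
begin

text \<open>If column \<open>j\<close> of \<open>A\<close> vanishes and \<open>c\<^sub>j > 0\<close>, moving from a feasible point along
  the \<open>j\<close>-th coordinate axis stays feasible and increases the objective without bound.
  Otherwise every \<open>j\<close> with \<open>c\<^sub>j > 0\<close> has a row \<open>i\<close> with \<open>A\<^sub>i\<^sub>j > 0\<close>; since \<open>A \<ge> 0\<close> and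
  \<open>x \<ge> 0\<close>, that row alone gives \<open>x\<^sub>j \<le> b\<^sub>i / A\<^sub>i\<^sub>j\<close>, so \<open>c\<^sup>T x\<close> is bounded on the
  feasible set.\<close>

lemma nonneg_matrix_coordinate_bound:
  fixes A :: "'a::linordered_field ^ 'n ^ 'm"
  assumes "\<forall>i j. A $ i $ j \<ge> 0" and "\<forall>k. x $ k \<ge> 0"
    and "(A *v x) $ i \<le> b $ i" and "A $ i $ j > 0"
  shows "x $ j \<le> b $ i / A $ i $ j"
proof -
  have "A $ i $ j * x $ j \<le> (\<Sum>k\<in>UNIV. A $ i $ k * x $ k)"
    by (rule member_le_sum) (use assms(1,2) in auto)
  also have "\<dots> \<le> b $ i"
    using assms(3) by (simp add: matrix_vector_mult_def)
  finally show ?thesis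
    using assms(4) by (simp add: pos_le_divide_eq mult.commute)
qed

lemma lp_objective_bounded_above:
  fixes A :: "real ^ 'n ^ 'm" and b :: "real ^ 'm" and c :: "real ^ 'n"
  assumes A_nonneg: "\<forall>i j. A $ i $ j \<ge> 0"
    and row_pos: "\<And>j. c $ j > 0 \<Longrightarrow> \<exists>i. A $ i $ j > 0"
  obtains B where
    "\<And>x. \<forall>i. (A *v x) $ i \<le> b $ i \<Longrightarrow> \<forall>k. x $ k \<ge> 0 \<Longrightarrow> c \<bullet> x \<le> B"
proof -
  obtain r where r: "\<And>j. c $ j > 0 \<Longrightarrow> A $ r j $ j > 0"
    using row_pos by metis
  have "c \<bullet> x \<le> (\<Sum>j\<in>UNIV. if c $ j > 0 then c $ j * (b $ r j / A $ r j $ j) else 0)"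
    if feas: "\<forall>i. (A *v x) $ i \<le> b $ i" and x_nonneg: "\<forall>k. x $ k \<ge> 0" for x
  proof -
    have "c \<bullet> x = (\<Sum>j\<in>UNIV. c $ j * x $ j)"
      by (simp add: inner_vec_def)
    also have "\<dots> \<le> (\<Sum>j\<in>UNIV. if c $ j > 0 then c $ j * (b $ r j / A $ r j $ j) else 0)"
    proof (rule sum_mono)
      fix j
      show "c $ j * x $ j \<le> (if c $ j > 0 then c $ j * (b $ r j / A $ r j $ j) else 0)"
      proof (cases "c $ j > 0")
        case True
        then have "x $ j \<le> b $ r j / A $ r j $ j"
          using nonneg_matrix_coordinate_bound[OF A_nonneg x_nonneg] feas r by blast
        with True show ?thesis
          by (simp add: mult_left_mono del: times_divide_eq_right)
      next
        case False
        with x_nonneg show ?thesis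
          by (simp add: mult_nonpos_nonneg)
      qed
    qed
    finally show ?thesis .
  qed
  with that show thesis .
qed

lemma lp_objective_unbounded_above:
  fixes A :: "real ^ 'n ^ 'm" and b :: "real ^ 'm" and c :: "real ^ 'n"
  assumes "c $ j > 0" and "column j A = 0"
    and "\<forall>i. (A *v x0) $ i \<le> b $ i" and "\<forall>k. x0 $ k \<ge> 0"
  shows "\<exists>x. (\<forall>i. (A *v x) $ i \<le> b $ i) \<and> (\<forall>k. x $ k \<ge> 0) \<and> c \<bullet> x > M"
proof -
  define t where "t = \<bar>M - c \<bullet> x0\<bar> / c $ j + 1"
  define x where "x = x0 + t *\<^sub>R axis j 1"
  have t_nonneg: "t \<ge> 0"
    using assms(1) by (simp add: t_def add_nonneg_pos)
  have "A *v x = A *v x0"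
    using assms(2)
    by (simp add: x_def matrix_vector_right_distrib matrix_vector_mult_scaleR
        matrix_vector_mult_basis)
  moreover have "\<forall>k. x $ k \<ge> 0"
    using assms(4) t_nonneg by (simp add: x_def axis_def)
  moreover have "c \<bullet> x > M"
  proof -
    have "c \<bullet> x = c \<bullet> x0 + \<bar>M - c \<bullet> x0\<bar> + c $ j"
      using assms(1) by (simp add: x_def t_def inner_add_right inner_axis field_simps)
    with assms(1) show ?thesis
      by (smt (verit) abs_ge_self)
  qed
  ultimately show ?thesis
    using assms(3) by (intro exI[of _ x]) simp
qed

theorem proposition3:
  fixes A :: "real ^ 'n ^ 'm" and b :: "real ^ 'm" and c :: "real ^ 'n"
  assumes A_nonneg: "\<forall>i j. A $ i $ j \<ge> 0"
    and feasible: "\<exists>x :: real ^ 'n. (\<forall>i. (A *v x) $ i \<le> b $ i) \<and> (\<forall>j. x $ j \<ge> 0)"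
  shows "(\<forall>M :: real. \<exists>x :: real ^ 'n. (\<forall>i. (A *v x) $ i \<le> b $ i) \<and> (\<forall>j. x $ j \<ge> 0) \<and> c \<bullet> x > M)
         \<longleftrightarrow> (\<exists>j. c $ j > 0 \<and> (\<forall>i. A $ i $ j = 0))"
proof
  assume unbounded: "\<forall>M :: real. \<exists>x :: real ^ 'n. (\<forall>i. (A *v x) $ i \<le> b $ i) \<and> (\<forall>j. x $ j \<ge> 0) \<and> c \<bullet> x > M"
  show "\<exists>j. c $ j > 0 \<and> (\<forall>i. A $ i $ j = 0)"
  proof (rule ccontr)
    assume "\<not> ?thesis"
    then have "\<exists>i. A $ i $ j > 0" if "c $ j > 0" for j
      using that A_nonneg by (metis order_less_le)
    then obtain B where "\<And>x. \<forall>i. (A *v x) $ i \<le> b $ i \<Longrightarrow> \<forall>k. x $ k \<ge> 0 \<Longrightarrow> c \<bullet> x \<le> B"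
      using lp_objective_bounded_above[OF A_nonneg] by blast
    with unbounded show False
      by (meson not_less)
  qed
next
  assume "\<exists>j. c $ j > 0 \<and> (\<forall>i. A $ i $ j = 0)"
  then obtain j where "c $ j > 0" "column j A = 0"
    by (auto simp: column_def vec_eq_iff)
  with feasible show "\<forall>M :: real. \<exists>x :: real ^ 'n. (\<forall>i. (A *v x) $ i \<le> b $ i) \<and> (\<forall>j. x $ j \<ge> 0) \<and> c \<bullet> x > M"
    using lp_objective_unbounded_above by blast
qed

end
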